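(* Let $G$, $\delta V$, $\rho$, $G^{BU}$, $U$ and $H=\begin{pmatrix}a&b\\c&d\end{pmatrix}$ (unitary, $abcd\neq0$, $d\in\mathbb{R}$, $\omega=-\det H$) be as in the context, and let $S$ be the scattering matrix of the facial quantum walk on $\mathbb{C}^{\delta V^{BU}}$. The vertex sets $\{x_0(f),\dots,x_{\kappa_f-1}(f)\}$, $f\in F^{ex}$, partition $\delta V^{BU}$. With respect to this partition $S$ is block diagonal, $S=\bigoplus_{f\in F^{ex}}S_f$, where, after identifying $\mathbb{C}^{\{x_0(f),\dots,x_{\kappa_f-1}(f)\}}$ with $\mathbb{C}^{\{0,\dots,\kappa_f-1\}}$ via $x_j(f)\leftrightarrow j$, $$S_f=bc\,P_f(\omega)\bigl(I_f-aP_f(\omega)\bigr)^{-1}+d\,I_f.$$ Here $I_f$ is the identity on $\mathbb{C}^{\{0,\dots,\kappa_f-1\}}$ and $(P_f(\omega)h)(j)=\omega^{\delta_{j-1}(f)}h(j-1)$, with indices taken modulo $\kappa_f$.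
   Context: Setting. $G=(V,E)$ is a finite connected simple graph and $\delta V\subseteq V$ a set of boundary vertices. To each $u\in\delta V$ a semi-infinite path (tail) is attached with origin $u$; let $\tau_u$ be the neighbour of $u$ on its tail. Let $\tilde N_u$ be the set of neighbours of $u$ in $G$, together with $\tau_u$ if $u\in\delta V$. A rotation $\rho=(\rho_u)_{u\in V}$ consists of cyclic permutations $\rho_u$ of $\tilde N_u$ of length $|\tilde N_u|$. Blow-up graph. $V^{BU}=\{(u,v):u\in V,\ v\in\tilde N_u\}$, with arcs $A^{BU}=A_{is}\sqcup A_{br}$: island arcs $(u,v)\to(u,\rho_u(v))$ and bridge arcs $(u,v)\to(v,u)$ for $u,v\in V$ adjacent in $G$. For a bridge arc $e$, $\bar e$ is its reverse. Let $\delta V^{BU}=\{(u,\tau_u):u\in\delta V\}$. To each $x\in\delta V^{BU}$ a tail is attached: incoming arcs $e^x_0,e^x_1,\dots$ with $t(e^x_0)=x$ and $t(e^x_{j+1})=o(e^x_j)$, and their reverses $\bar e^x_j$ (outgoing); $A_{tl}$ is the set of all tail arcs. Each $x\in V^{BU}$ has exactly one incoming and one outgoing island arc, and one further incoming and one further outgoing arc (a bridge and its reverse, or $e^x_0$ and $\bar e^x_0$ if $x\in\delta V^{BU}$). Walk. $U$ acts on $\mathbb{C}^{A^{BU}\cup A_{tl}}$ by $(U\Psi)(e^x_j)=\Psi(e^x_{j+1})$ and $(U\Psi)(\bar e^x_{j+1})=\Psi(\bar e^x_j)$. At every $x\in V^{BU}$, with incoming island arc $e^{is}_+$, other incoming arc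 $e^{br}_+$, outgoing island arc $e^{is}_-$ and other outgoing arc $e^{br}_-$, one has $\bigl((U\Psi)(e^{is}_-),(U\Psi)(e^{br}_-)\bigr)^{T}=H\bigl(\Psi(e^{is}_+),\Psi(e^{br}_+)\bigr)^{T}$. Scattering matrix. Given an inflow $\alpha\in\mathbb{C}^{\delta V^{BU}}$, set $\Psi_0(e^x_j)=\alpha(x)$ for all $x$ and $j$, and $\Psi_0=0$ elsewhere. Then $U^n\Psi_0$ converges pointwise to some $\Psi_\infty$ with $U\Psi_\infty=\Psi_\infty$ (this is a known result). The outflow is $\beta(x)=\Psi_\infty(\bar e^x_0)$. The scattering matrix $S$ is the matrix with $\beta=S\alpha$ for every $\alpha$; its existence is known. Facial walks. Define a bijection $\sigma$ of $A^{BU}$ as follows. A bridge arc $e$ is sent to the island arc starting at $t(e)$. An island arc ending at $x\notin\delta V^{BU}$ is sent to the bridge arc starting at $x$. An island arc ending at $x\in\delta V^{BU}$ is sent to the island arc starting at $x$. The facial closed walks are the cycles of $\sigma$. A facial walk is external if it passes through a vertex of $\delta V^{BU}$, and internal otherwise; $F^{ex}$ and $F^{in}$ denote the corresponding sets. For $f\in F^{ex}$, let $x_0(f),\dots,x_{\kappa_f-1}(f)$ be the vertices of $\delta V^{BU}$ visited by $f$, in cyclic order of traversal. Let $\delta_m(f)$ be the number of bridge arcs traversed by $f$ between $x_m(f)$ and $x_{m+1}(f)$ (indices mod $\kappa_f$). *)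

theory Defs
  imports "HOL-Analysis.Analysis" "HOL-Combinatorics.Permutations" "Jordan_Normal_Form.Matrix"
begin

text \<open>Extended neighbours: a genuine neighbour Nb v, or the tail neighbour Tl (= tau_u).\<close>
datatype 'v port = Nb 'v | Tl

definition simple_graph :: "'v set \<Rightarrow> ('v \<Rightarrow> 'v \<Rightarrow> bool) \<Rightarrow> bool" where
  "simple_graph V adj \<longleftrightarrow> finite V \<and> (\<forall>u v. adj u v \<longrightarrow> u \<in> V \<and> v \<in> V \<and> u \<noteq> v \<and> adj v u)"

definition graph_connected :: "'v set \<Rightarrow> ('v \<Rightarrow> 'v \<Rightarrow> bool) \<Rightarrow> bool" where
  "graph_connected V adj \<longleftrightarrow> V \<noteq> {} \<and> (\<forall>u\<in>V. \<forall>v\<in>V. (u, v) \<in> {(x, y). adj x y}\<^sup>*)"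

definition Nt :: "('v \<Rightarrow> 'v \<Rightarrow> bool) \<Rightarrow> 'v set \<Rightarrow> 'v \<Rightarrow> 'v port set" where
  "Nt adj dV u = Nb ` {v. adj u v} \<union> (if u \<in> dV then {Tl} else {})"

definition is_rotation :: "'v set \<Rightarrow> ('v \<Rightarrow> 'v \<Rightarrow> bool) \<Rightarrow> 'v set \<Rightarrow> ('v \<Rightarrow> 'v port \<Rightarrow> 'v port) \<Rightarrow> bool" where
  "is_rotation V adj dV rho \<longleftrightarrow> (\<forall>u\<in>V. rho u permutes Nt adj dV u \<and>
     (\<forall>p\<in>Nt adj dV u. \<forall>q\<in>Nt adj dV u. \<exists>k. (rho u ^^ k) p = q))"

type_synonym 'v bvert = "'v \<times> 'v port"

definition VBU :: "'v set \<Rightarrow> ('v \<Rightarrow> 'v \<Rightarrow> bool) \<Rightarrow> 'v set \<Rightarrow> 'v bvert set" where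
  "VBU V adj dV = {(u, p). u \<in> V \<and> p \<in> Nt adj dV u}"

definition dVBU :: "'v set \<Rightarrow> 'v bvert set" where
  "dVBU dV = {(u, Tl) | u. u \<in> dV}"

text \<open>Arcs, named by their origin: Isl x is the island arc x -> (u, rho_u p) for x = (u,p);
  Brg x is the bridge arc (u, Nb v) -> (v, Nb u); TIn x j = e^x_j (incoming tail arcs),
  TOut x j = reverse of e^x_j (outgoing tail arcs).\<close>
datatype 'x arc = Isl 'x | Brg 'x | TIn 'x nat | TOut 'x nat

definition ABU :: "'v set \<Rightarrow> ('v \<Rightarrow> 'v \<Rightarrow> bool) \<Rightarrow> 'v set \<Rightarrow> 'v bvert arc set" where
  "ABU V adj dV = Isl ` VBU V adj dV \<union> Brg ` {x \<in> VBU V adj dV. snd x \<noteq> Tl}"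

fun arc_end :: "('v \<Rightarrow> 'v port \<Rightarrow> 'v port) \<Rightarrow> 'v bvert arc \<Rightarrow> 'v bvert" where
  "arc_end rho (Isl (u, p)) = (u, rho u p)"
| "arc_end rho (Brg (u, Nb v)) = (v, Nb u)"
| "arc_end rho (Brg (u, Tl)) = (u, Tl)"
| "arc_end rho (TIn x j) = x"
| "arc_end rho (TOut x j) = x"

fun in_is :: "('v \<Rightarrow> 'v port \<Rightarrow> 'v port) \<Rightarrow> 'v bvert \<Rightarrow> 'v bvert arc" where
  "in_is rho (u, p) = Isl (u, inv_into UNIV (rho u) p)"

fun in_br :: "'v bvert \<Rightarrow> 'v bvert arc" where
  "in_br (u, Nb v) = Brg (v, Nb u)"
| "in_br (u, Tl) = TIn (u, Tl) 0"

definition Uwalk :: "'v set \<Rightarrow> ('v \<Rightarrow> 'v \<Rightarrow> bool) \<Rightarrow> 'v set \<Rightarrow> ('v \<Rightarrow> 'v port \<Rightarrow> 'v port)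
    \<Rightarrow> complex \<Rightarrow> complex \<Rightarrow> complex \<Rightarrow> complex
    \<Rightarrow> ('v bvert arc \<Rightarrow> complex) \<Rightarrow> ('v bvert arc \<Rightarrow> complex)" where
  "Uwalk V adj dV rho a b c d \<Psi> e = (case e of
      Isl x \<Rightarrow> if x \<in> VBU V adj dV then a * \<Psi> (in_is rho x) + b * \<Psi> (in_br x) else 0
    | Brg x \<Rightarrow> if x \<in> VBU V adj dV \<and> snd x \<noteq> Tl then c * \<Psi> (in_is rho x) + d * \<Psi> (in_br x) else 0
    | TIn x j \<Rightarrow> if x \<in> dVBU dV then \<Psi> (TIn x (Suc j)) else 0
    | TOut x j \<Rightarrow> if x \<in> dVBU dV then
         (case j of 0 \<Rightarrow> c * \<Psi> (in_is rho x) + d * \<Psi> (in_br x) | Suc i \<Rightarrow> \<Psi> (TOut x i))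
       else 0)"

definition Psi0 :: "'v set \<Rightarrow> ('v bvert \<Rightarrow> complex) \<Rightarrow> ('v bvert arc \<Rightarrow> complex)" where
  "Psi0 dV \<alpha> e = (case e of TIn x j \<Rightarrow> if x \<in> dVBU dV then \<alpha> x else 0 | _ \<Rightarrow> 0)"

text \<open>Unitarity of H = [[a,b],[c,d]]: H^* H = I.\<close>
definition unitary2 :: "complex \<Rightarrow> complex \<Rightarrow> complex \<Rightarrow> complex \<Rightarrow> bool" where
  "unitary2 a b c d \<longleftrightarrow> cnj a * a + cnj c * c = 1 \<and> cnj b * b + cnj d * d = 1
     \<and> cnj a * b + cnj c * d = 0"

definition sigma :: "'v set \<Rightarrow> ('v \<Rightarrow> 'v port \<Rightarrow> 'v port) \<Rightarrow> 'v bvert arc \<Rightarrow> 'v bvert arc" where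
  "sigma dV rho e = (case e of
      Brg x \<Rightarrow> Isl (arc_end rho (Brg x))
    | Isl x \<Rightarrow> (if arc_end rho (Isl x) \<in> dVBU dV then Isl (arc_end rho (Isl x))
               else Brg (arc_end rho (Isl x)))
    | _ \<Rightarrow> e)"

text \<open>Facial closed walks = cycles (orbits) of sigma on the arcs of the blow-up graph.\<close>
definition faces :: "'v set \<Rightarrow> ('v \<Rightarrow> 'v \<Rightarrow> bool) \<Rightarrow> 'v set \<Rightarrow> ('v \<Rightarrow> 'v port \<Rightarrow> 'v port) \<Rightarrow> 'v bvert arc set set" where
  "faces V adj dV rho = {{(sigma dV rho ^^ n) e | n. True} | e. e \<in> ABU V adj dV}"

definition bverts :: "'v set \<Rightarrow> ('v \<Rightarrow> 'v port \<Rightarrow> 'v port) \<Rightarrow> 'v bvert arc set \<Rightarrow> 'v bvert set" where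
  "bverts dV rho f = arc_end rho ` f \<inter> dVBU dV"

definition faces_ex :: "'v set \<Rightarrow> ('v \<Rightarrow> 'v \<Rightarrow> bool) \<Rightarrow> 'v set \<Rightarrow> ('v \<Rightarrow> 'v port \<Rightarrow> 'v port) \<Rightarrow> 'v bvert arc set set" where
  "faces_ex V adj dV rho = {f \<in> faces V adj dV rho. bverts dV rho f \<noteq> {}}"

text \<open>After visiting boundary vertex y, a facial walk leaves along the island arc Isl y.
  seg_len y = index of the arc (in the sequence sigma^n (Isl y)) that arrives at the next
  boundary vertex; next_bv y is that vertex; nbr y is the number of bridge arcs traversed in between.\<close>
definition seg_len :: "'v set \<Rightarrow> ('v \<Rightarrow> 'v port \<Rightarrow> 'v port) \<Rightarrow> 'v bvert \<Rightarrow> nat" where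
  "seg_len dV rho y = (LEAST k. arc_end rho ((sigma dV rho ^^ k) (Isl y)) \<in> dVBU dV)"

definition next_bv :: "'v set \<Rightarrow> ('v \<Rightarrow> 'v port \<Rightarrow> 'v port) \<Rightarrow> 'v bvert \<Rightarrow> 'v bvert" where
  "next_bv dV rho y = arc_end rho ((sigma dV rho ^^ seg_len dV rho y) (Isl y))"

definition nbr :: "'v set \<Rightarrow> ('v \<Rightarrow> 'v port \<Rightarrow> 'v port) \<Rightarrow> 'v bvert \<Rightarrow> nat" where
  "nbr dV rho y = card {k. k \<le> seg_len dV rho y \<and> (\<exists>z. (sigma dV rho ^^ k) (Isl y) = Brg z)}"

definition kappa :: "'v set \<Rightarrow> ('v \<Rightarrow> 'v port \<Rightarrow> 'v port) \<Rightarrow> 'v bvert arc set \<Rightarrow> nat" where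
  "kappa dV rho f = card (bverts dV rho f)"

definition xf :: "'v set \<Rightarrow> ('v \<Rightarrow> 'v port \<Rightarrow> 'v port) \<Rightarrow> 'v bvert \<Rightarrow> nat \<Rightarrow> 'v bvert" where
  "xf dV rho x0 j = (next_bv dV rho ^^ j) x0"

definition deltaf :: "'v set \<Rightarrow> ('v \<Rightarrow> 'v port \<Rightarrow> 'v port) \<Rightarrow> 'v bvert \<Rightarrow> nat \<Rightarrow> nat" where
  "deltaf dV rho x0 m = nbr dV rho (xf dV rho x0 m)"

definition Pmat :: "nat \<Rightarrow> (nat \<Rightarrow> nat) \<Rightarrow> complex \<Rightarrow> complex mat" where
  "Pmat k dl w = mat k k (\<lambda>(i, j). if i = Suc j mod k then w ^ dl j else 0)"

end

(* Facial walks are the cycles of sigma on the finite set of arcs, and the boundary vertices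
   visited by an external facial walk form one orbit of the first-return map next_bv; hence every
   boundary vertex lies on exactly one external face.

   For the scattering matrix one writes down the limit state directly. On the island arcs of a
   facial walk its values are multiplied by omega at every bridge (the local condition at a bridge
   reduces to a = -d omega, which is where d real enters), facial walks avoiding the boundary carry
   zero, and the values Y at the boundary vertices x_0, ..., x_(kappa-1) of a face must satisfy the
   cyclic recurrence Y(x_(j+1)) = omega^(delta_j) (a Y(x_j) + b alpha(x_j)), i.e.
   (I - a P) Y = b P alpha. Since |a| < 1 = |omega| this recurrence is a contraction around the
   cycle, so I - a P is invertible and Y = b P (I - a P)^(-1) alpha.

   The difference between U^n Psi_0 and the limit state evolves under U without inflow. As the coin
   is unitary, its energy drops at each step by |c|^2 times the energy on the island arcs entering
   the boundary, so these values are square summable and tend to 0. The outflow at x therefore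
   converges to c Y(x) + d alpha(x), which is the claimed formula for S_f. *)

theory Submission
  imports Defs "HOL-Combinatorics.Orbits" "Jordan_Normal_Form.Determinant"
begin

lemma self_in_orbit_if_bij_betw:
  assumes "bij_betw f S S" and "finite S" and "x \<in> S"
  shows "x \<in> orbit f x"
proof -
  let ?g = "perm_restrict f S"
  have "bij_betw ?g S S"
    using assms(1) by (subst bij_betw_cong[where g = f]) (auto simp: perm_restrict_def)
  then have "?g permutes S"
    by (rule bij_imp_permutes) (simp add: perm_restrict_def)
  then have "x \<in> orbit ?g x"
    using assms(2) by (intro permutation_self_in_orbit permutes_imp_permutation)
  moreover have "orbit ?g x = orbit f x"
    using assms(1,3) by (intro orbit_cong0[where A = S]) (auto simp: perm_restrict_def bij_betw_def)
  ultimately show ?thesis by simp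
qed

lemma orbit_eq_if_mem_orbit:
  assumes "x \<in> orbit f x" and "y \<in> orbit f x"
  shows "orbit f y = orbit f x"
  using assms by (auto intro: orbit_trans orbit_swap)

lemma
  assumes "x \<in> orbit f x"
  shows bij_betw_funpow_orbit: "bij_betw (\<lambda>n. (f ^^ n) x) {..<card (orbit f x)} (orbit f x)"
    and funpow_card_orbit: "(f ^^ card (orbit f x)) x = x"
proof -
  have "bij_betw (\<lambda>n. (f ^^ n) x) {..<funpow_dist1 f x x} (orbit f x)"
    using inj_on_funpow_dist1[OF assms] orbit_conv_funpow_dist1[OF assms]
    by (simp add: bij_betw_def atLeast0LessThan)
  moreover from this have "card (orbit f x) = funpow_dist1 f x x"
    by (metis bij_betw_same_card card_lessThan)
  ultimately show "bij_betw (\<lambda>n. (f ^^ n) x) {..<card (orbit f x)} (orbit f x)"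
    and "(f ^^ card (orbit f x)) x = x"
    using funpow_dist1_prop[OF assms] by simp_all
qed

lemma card_le_Suc_shift:
  "card {k. k \<le> Suc L \<and> Q k} = of_bool (Q 0) + card {k. k \<le> L \<and> Q (Suc k)}"
proof -
  have "{k. k \<le> Suc L \<and> Q k} = {k. k = 0 \<and> Q 0} \<union> Suc ` {k. k \<le> L \<and> Q (Suc k)}"
    by (auto simp: image_iff; metis Suc_le_mono not0_implies_Suc)
  moreover have "card {k. k = 0 \<and> Q 0} = of_bool (Q 0)"
    by (cases "Q 0") auto
  moreover have "card (Suc ` {k. k \<le> L \<and> Q (Suc k)}) = card {k. k \<le> L \<and> Q (Suc k)}"
    by (simp add: card_image)
  moreover have "finite {k. k \<le> L \<and> Q (Suc k)}"
    by simp
  ultimately show ?thesis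
    by (simp add: card_Un_disjoint)
qed

section \<open>Unitary coins\<close>

lemma cnj_mult_self: "cnj z * z = complex_of_real (norm z ^ 2)"
  by (metis complex_norm_square mult.commute of_real_power)

lemma unitary2_norm_preserving:
  assumes "unitary2 a b c d"
  shows "norm (a * i + b * j) ^ 2 + norm (c * i + d * j) ^ 2 = norm i ^ 2 + norm j ^ 2"
proof -
  have "complex_of_real (norm (a * i + b * j) ^ 2 + norm (c * i + d * j) ^ 2)
      = (cnj a * a + cnj c * c) * (cnj i * i) + (cnj b * b + cnj d * d) * (cnj j * j)
        + (cnj a * b + cnj c * d) * (cnj i * j) + cnj (cnj a * b + cnj c * d) * (cnj j * i)"
    by (simp only: cnj_mult_self [symmetric] of_real_add) (simp add: algebra_simps)
  also have "\<dots> = complex_of_real (norm i ^ 2 + norm j ^ 2)"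
    using assms by (simp add: unitary2_def cnj_mult_self)
  finally show ?thesis
    using of_real_eq_iff by blast
qed

lemma unitary2_norm_det:
  assumes "unitary2 a b c d"
  shows "norm (a * d - b * c) = 1"
proof -
  \<comment> \<open>Lagrange's identity \<open>|det H|\<^sup>2 = det (H\<^sup>* H)\<close>\<close>
  have "complex_of_real (norm (a * d - b * c) ^ 2)
      = (cnj a * a + cnj c * c) * (cnj b * b + cnj d * d)
        - cnj (cnj a * b + cnj c * d) * (cnj a * b + cnj c * d)"
    by (simp only: cnj_mult_self [symmetric]) (simp add: algebra_simps)
  also have "\<dots> = 1"
    using assms by (simp add: unitary2_def)
  finally have "norm (a * d - b * c) ^ 2 = 1"
    using of_real_eq_1_iff by blast
  then show ?thesis
    using norm_ge_zero[of "a * d - b * c"] by (auto simp: power2_eq_1_iff)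
qed

lemma unitary2_real_corner:
  assumes "unitary2 a b c d" and "d \<in> \<real>"
  shows "a = d * (a * d - b * c)"
proof -
  have d: "cnj d = d"
    using assms(2) by (simp add: Reals_cnj_iff)
  have "cnj (cnj a * b + cnj c * d) = 0"
    using assms(1) by (simp add: unitary2_def)
  then have "a * cnj b = - (c * d)"
    using d by (simp add: add_eq_0_iff mult.commute)
  then have "a * (cnj b * b) = - (b * c * d)"
    by (metis mult.assoc mult.commute mult_minus_left)
  moreover have "cnj b * b = 1 - d * d"
    using assms(1) d by (simp add: unitary2_def algebra_simps)
  ultimately have "a * (1 - d * d) = - (b * c * d)"
    by simp
  have "a = a * (1 - d * d) + a * (d * d)"
    by (simp add: algebra_simps)
  also have "\<dots> = d * (a * d - b * c)"
    unfolding \<open>a * (1 - d * d) = - (b * c * d)\<close> by (simp add: algebra_simps)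
  finally show ?thesis .
qed

lemma unitary2_norm_less_1:
  assumes "unitary2 a b c d" and "c \<noteq> 0"
  shows "norm a < 1"
proof -
  have "norm a ^ 2 + norm c ^ 2 = 1"
    using assms(1) unitary2_norm_preserving[of a b c d 1 0] by simp
  with assms(2) have "norm a ^ 2 < 1"
    by (smt (verit) zero_less_power zero_less_norm_iff)
  then show ?thesis
    using abs_square_less_1[of "norm a"] by simp
qed

section \<open>Cyclic recurrences and the matrix \<open>P\<^sub>f\<close>\<close>

lemma cyclic_contraction_zero:
  fixes z :: "nat \<Rightarrow> 'a :: real_normed_vector"
  assumes "0 \<le> q" and "q < 1" and "\<And>j. j < k \<Longrightarrow> norm (z (Suc j mod k)) \<le> q * norm (z j)"
    and "j < k"
  shows "z j = 0"
proof -
  have "finite {..<k}" and "{..<k} \<noteq> {}"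
    using assms(4) by auto
  then obtain j0 where j0: "j0 \<in> {..<k}" and "Max ((\<lambda>j. norm (z j)) ` {..<k}) = norm (z j0)"
    by (rule obtains_MAX)
  then have max: "norm (z j) \<le> norm (z j0)" if "j < k" for j
    using Max_ge[of "(\<lambda>j. norm (z j)) ` {..<k}" "norm (z j)"] that by auto
  define j1 where "j1 = (if j0 = 0 then k - 1 else j0 - 1)"
  have j1: "j1 < k" and "Suc j1 mod k = j0"
    using j0 by (auto simp: j1_def)
  then have "norm (z j0) \<le> q * norm (z j0)"
    using assms(3)[OF j1] mult_left_mono[OF max[OF j1] assms(1)] by simp
  then have "(1 - q) * norm (z j0) \<le> 0"
    by (simp add: algebra_simps)
  then have "norm (z j0) = 0"
    using assms(2) by (auto simp: mult_le_0_iff)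
  then show ?thesis
    using max[OF assms(4)] by simp
qed

lemma cyclic_recurrence_unique:
  fixes u v w \<beta> :: "nat \<Rightarrow> complex"
  assumes "norm a < 1" and "\<And>j. j < k \<Longrightarrow> norm (w j) = 1"
    and "\<And>j. j < k \<Longrightarrow> u (Suc j mod k) = w j * (a * u j + \<beta> j)"
    and "\<And>j. j < k \<Longrightarrow> v (Suc j mod k) = w j * (a * v j + \<beta> j)"
    and "j < k"
  shows "u j = v j"
proof -
  have "u j - v j = 0"
  proof (rule cyclic_contraction_zero[where z = "\<lambda>j. u j - v j" and q = "norm a"])
    fix i assume "i < k"
    then have "u (Suc i mod k) - v (Suc i mod k) = w i * (a * (u i - v i))"
      using assms(3,4) by (simp add: algebra_simps)
    then show "norm (u (Suc i mod k) - v (Suc i mod k)) \<le> norm a * norm (u i - v i)"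
      using assms(2) \<open>i < k\<close> by (simp add: norm_mult)
  qed (simp_all add: assms(1,5))
  then show ?thesis
    by simp
qed

lemma Pmat_carrier: "Pmat k dl w \<in> carrier_mat k k"
  by (simp add: Pmat_def)

lemma mult_vec_Pmat_Suc_mod:
  assumes "v \<in> carrier_vec k" and "j < k"
  shows "(Pmat k dl w *\<^sub>v v) $ (Suc j mod k) = w ^ dl j * v $ j"
proof -
  have Suc_mod: "Suc i mod k = (if Suc i = k then 0 else Suc i)" if "i < k" for i
    using that by (simp add: Suc_le_eq le_neq_implies_less)
  have "Suc j mod k = Suc i mod k \<longleftrightarrow> i = j" if "i < k" for i
    using Suc_mod[OF that] Suc_mod[OF assms(2)] by auto
  then have "(Pmat k dl w *\<^sub>v v) $ (Suc j mod k) = (\<Sum>i<k. (if i = j then w ^ dl i else 0) * v $ i)"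
    using assms by (auto simp: Pmat_def scalar_prod_def atLeast0LessThan intro!: sum.cong)
  also have "\<dots> = (\<Sum>i<k. if i = j then w ^ dl i * v $ i else 0)"
    by (rule sum.cong) simp_all
  finally show ?thesis
    using assms(2) by simp
qed

lemma mult_vec_one_minus_smult:
  fixes A :: "'a :: comm_ring_1 mat"
  assumes "A \<in> carrier_mat k k" and "v \<in> carrier_vec k" and "i < k"
  shows "((1\<^sub>m k - a \<cdot>\<^sub>m A) *\<^sub>v v) $ i = v $ i - a * (A *\<^sub>v v) $ i"
  using assms by (simp add: minus_mult_distrib_mat_vec[of _ k k] scalar_prod_smult_left)

lemma one_minus_smult_Pmat_invertible:
  fixes a w :: complex
  assumes "norm a < 1" and "norm w = 1"
  shows "\<exists>M \<in> carrier_mat k k. (1\<^sub>m k - a \<cdot>\<^sub>m Pmat k dl w) * M = 1\<^sub>m k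
    \<and> M * (1\<^sub>m k - a \<cdot>\<^sub>m Pmat k dl w) = 1\<^sub>m k"
proof -
  let ?A = "1\<^sub>m k - a \<cdot>\<^sub>m Pmat k dl w"
  have A: "?A \<in> carrier_mat k k"
    using Pmat_carrier by (intro minus_carrier_mat smult_carrier_mat one_carrier_mat)
  have "det ?A \<noteq> 0"
  proof
    assume "det ?A = 0"
    then obtain v where v: "v \<in> carrier_vec k" "v \<noteq> 0\<^sub>v k" "?A *\<^sub>v v = 0\<^sub>v k"
      using det_0_iff_vec_prod_zero[OF A] by blast
    have "v $ j = 0" if "j < k" for j
    proof (rule cyclic_contraction_zero[where z = "\<lambda>j. v $ j" and q = "norm a"])
      fix i assume i: "i < k"
      then have "Suc i mod k < k"
        by simp
      then have "v $ (Suc i mod k) = a * (Pmat k dl w *\<^sub>v v) $ (Suc i mod k)"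
        using mult_vec_one_minus_smult[OF Pmat_carrier[of k dl w] v(1), of "Suc i mod k" a] v(3)
        by simp
      also have "\<dots> = a * (w ^ dl i * v $ i)"
        using mult_vec_Pmat_Suc_mod[OF v(1) i] by simp
      finally show "norm (v $ (Suc i mod k)) \<le> norm a * norm (v $ i)"
        using assms(2) by (simp add: norm_mult norm_power)
    qed (simp_all add: assms(1) that)
    then have "v = 0\<^sub>v k"
      using v(1) by (intro eq_vecI) auto
    with v(2) show False ..
  qed
  then have "?A \<in> Units (ring_mat TYPE(complex) k ())"
    by (rule det_non_zero_imp_unit[OF A])
  then show ?thesis
    by (auto simp: Units_def ring_mat_def)
qed

lemma resolvent_recurrence:
  fixes a b w :: complex
  assumes "M \<in> carrier_mat k k" and "(1\<^sub>m k - a \<cdot>\<^sub>m Pmat k dl w) * M = 1\<^sub>m k"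
    and "\<alpha> \<in> carrier_vec k" and "j < k"
  shows "b * (Pmat k dl w *\<^sub>v (M *\<^sub>v \<alpha>)) $ (Suc j mod k)
    = w ^ dl j * (a * (b * (Pmat k dl w *\<^sub>v (M *\<^sub>v \<alpha>)) $ j) + b * \<alpha> $ j)"
proof -
  let ?P = "Pmat k dl w"
  define m where "m = M *\<^sub>v \<alpha>"
  have m: "m \<in> carrier_vec k"
    using assms(1,3) by (simp add: m_def)
  have A: "1\<^sub>m k - a \<cdot>\<^sub>m ?P \<in> carrier_mat k k"
    using Pmat_carrier by (intro minus_carrier_mat smult_carrier_mat one_carrier_mat)
  have "(1\<^sub>m k - a \<cdot>\<^sub>m ?P) *\<^sub>v m = \<alpha>"
    unfolding m_def assoc_mult_mat_vec[OF A assms(1,3), symmetric] assms(2)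
    using assms(3) by simp
  then have "m $ j = \<alpha> $ j + a * (?P *\<^sub>v m) $ j"
    using mult_vec_one_minus_smult[OF Pmat_carrier[of k dl w] m assms(4), of a] by simp
  moreover have "(?P *\<^sub>v m) $ (Suc j mod k) = w ^ dl j * m $ j"
    by (rule mult_vec_Pmat_Suc_mod[OF m assms(4)])
  ultimately show ?thesis
    unfolding m_def[symmetric] by (simp add: algebra_simps)
qed

lemma scattering_row:
  fixes b c d :: "'a :: comm_ring_1"
  assumes "P \<in> carrier_mat k k" and "M \<in> carrier_mat k k" and "\<alpha> \<in> carrier_vec k" and "i < k"
  shows "(\<Sum>j<k. ((b * c) \<cdot>\<^sub>m (P * M) + d \<cdot>\<^sub>m 1\<^sub>m k) $$ (i, j) * \<alpha> $ j)
    = c * (b * (P *\<^sub>v (M *\<^sub>v \<alpha>)) $ i) + d * \<alpha> $ i"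
proof -
  have "(\<Sum>j<k. ((b * c) \<cdot>\<^sub>m (P * M) + d \<cdot>\<^sub>m 1\<^sub>m k) $$ (i, j) * \<alpha> $ j)
      = (\<Sum>j<k. (b * c) * ((P * M) $$ (i, j) * \<alpha> $ j) + (if i = j then d * \<alpha> $ j else 0))"
  proof (rule sum.cong)
    fix j assume "j \<in> {..<k}"
    then have "((b * c) \<cdot>\<^sub>m (P * M) + d \<cdot>\<^sub>m 1\<^sub>m k) $$ (i, j) = (b * c) * (P * M) $$ (i, j) + (if i = j then d else 0)"
      using assms(4) by (auto simp: carrier_matD[OF assms(1)] carrier_matD[OF assms(2)])
    then show "((b * c) \<cdot>\<^sub>m (P * M) + d \<cdot>\<^sub>m 1\<^sub>m k) $$ (i, j) * \<alpha> $ j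
        = (b * c) * ((P * M) $$ (i, j) * \<alpha> $ j) + (if i = j then d * \<alpha> $ j else 0)"
      by (simp add: distrib_right mult.assoc)
  qed simp
  also have "\<dots> = (b * c) * (\<Sum>j<k. (P * M) $$ (i, j) * \<alpha> $ j) + d * \<alpha> $ i"
    using assms(4) by (simp add: sum.distrib sum_distrib_left)
  also have "(\<Sum>j<k. (P * M) $$ (i, j) * \<alpha> $ j) = ((P * M) *\<^sub>v \<alpha>) $ i"
    using assms(3,4)
    by (auto simp: carrier_matD[OF assms(1)] carrier_matD[OF assms(2)] scalar_prod_def
        atLeast0LessThan intro: sum.cong)
  also have "(P * M) *\<^sub>v \<alpha> = P *\<^sub>v (M *\<^sub>v \<alpha>)"
    using assms(1-3) by simp
  finally show ?thesis
    using assms(4) by (simp add: algebra_simps)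
qed

section \<open>Facial walks of the blow-up graph\<close>

locale blowup_graph =
  fixes V :: "'v set" and adj :: "'v \<Rightarrow> 'v \<Rightarrow> bool" and dV :: "'v set"
    and rho :: "'v \<Rightarrow> 'v port \<Rightarrow> 'v port"
  assumes simple: "simple_graph V adj" and boundary_subset: "dV \<subseteq> V"
    and rotation: "is_rotation V adj dV rho"
begin

abbreviation "VB \<equiv> VBU V adj dV"
abbreviation "dVB \<equiv> dVBU dV"
abbreviation "arcs \<equiv> ABU V adj dV"
abbreviation "\<sigma> \<equiv> sigma dV rho"
abbreviation "tgt \<equiv> arc_end rho"

text \<open>Arcs are named by their origin, so the island arc entering \<open>x\<close> is \<open>Isl (rot_prev x)\<close>
  and, if \<open>snd x \<noteq> Tl\<close>, the bridge entering \<open>x\<close> is \<open>Brg (opp x)\<close>.\<close>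

definition rot_prev :: "'v bvert \<Rightarrow> 'v bvert" where
  "rot_prev x = (fst x, inv_into UNIV (rho (fst x)) (snd x))"

definition rot_next :: "'v bvert \<Rightarrow> 'v bvert" where
  "rot_next x = (fst x, rho (fst x) (snd x))"

definition opp :: "'v bvert \<Rightarrow> 'v bvert" where
  "opp x = (case snd x of Nb v \<Rightarrow> (v, Nb (fst x)) | Tl \<Rightarrow> x)"

definition bridge_verts :: "'v bvert set" where
  "bridge_verts = {x \<in> VB. snd x \<noteq> Tl}"

lemma finite_V: "finite V"
  using simple by (simp add: simple_graph_def)

lemma adjD: "adj u v \<Longrightarrow> u \<in> V \<and> v \<in> V \<and> adj v u"
  using simple by (simp add: simple_graph_def)

lemma rho_permutes: "u \<in> V \<Longrightarrow> rho u permutes Nt adj dV u"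
  using rotation by (simp add: is_rotation_def)

lemma rho_inv_into_cancel:
  assumes "u \<in> V"
  shows "rho u (inv_into UNIV (rho u) p) = p" and "inv_into UNIV (rho u) (rho u p) = p"
  using permutes_bij[OF rho_permutes[OF assms]] by (simp_all add: bij_is_inj bij_is_surj surj_f_inv_f)

lemma rho_in_Nt_iff: "u \<in> V \<Longrightarrow> rho u p \<in> Nt adj dV u \<longleftrightarrow> p \<in> Nt adj dV u"
  by (metis rho_permutes permutes_in_image)

lemma Tl_in_Nt_iff: "Tl \<in> Nt adj dV u \<longleftrightarrow> u \<in> dV"
  by (auto simp: Nt_def)

lemma Nb_in_Nt_iff: "Nb v \<in> Nt adj dV u \<longleftrightarrow> adj u v"
  by (auto simp: Nt_def)

lemma mem_VB_iff: "x \<in> VB \<longleftrightarrow> fst x \<in> V \<and> snd x \<in> Nt adj dV (fst x)"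
  by (cases x) (auto simp: VBU_def)

lemma mem_dVB_iff: "x \<in> dVB \<longleftrightarrow> x \<in> VB \<and> snd x = Tl"
  using boundary_subset by (cases x) (auto simp: dVBU_def mem_VB_iff Tl_in_Nt_iff)

lemma VB_eq_Un: "VB = bridge_verts \<union> dVB" and bridge_verts_Int_dVB: "bridge_verts \<inter> dVB = {}"
  by (auto simp: bridge_verts_def mem_dVB_iff)

lemma bridge_vertsD: "x \<in> bridge_verts \<Longrightarrow> x \<in> VB \<and> snd x \<noteq> Tl \<and> x \<notin> dVB"
  and bridge_vertsI: "x \<in> VB \<Longrightarrow> x \<notin> dVB \<Longrightarrow> x \<in> bridge_verts"
  by (auto simp: bridge_verts_def mem_dVB_iff)

lemma finite_VB: "finite VB"
proof -
  have "VB \<subseteq> V \<times> (insert Tl (Nb ` V))"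
    using adjD by (auto simp: mem_VB_iff Nt_def split: if_splits)
  then show ?thesis
    using finite_V finite_subset by blast
qed

lemma finite_arcs: "finite arcs"
  using finite_VB by (simp add: ABU_def)

lemma finite_dVB: "finite dVB" and finite_bridge_verts: "finite bridge_verts"
  using finite_VB by (simp_all add: VB_eq_Un)

lemma rot_prev_in_VB: "x \<in> VB \<Longrightarrow> rot_prev x \<in> VB"
  by (auto simp: rot_prev_def mem_VB_iff) (metis rho_in_Nt_iff rho_inv_into_cancel(1))

lemma rot_next_in_VB: "x \<in> VB \<Longrightarrow> rot_next x \<in> VB"
  by (auto simp: rot_next_def mem_VB_iff rho_in_Nt_iff)

lemma rot_next_prev: "x \<in> VB \<Longrightarrow> rot_next (rot_prev x) = x"
  by (auto simp: rot_next_def rot_prev_def mem_VB_iff rho_inv_into_cancel)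

lemma rot_prev_next: "x \<in> VB \<Longrightarrow> rot_prev (rot_next x) = x"
  by (auto simp: rot_next_def rot_prev_def mem_VB_iff rho_inv_into_cancel)

lemma bij_betw_rot_prev: "bij_betw rot_prev VB VB"
  by (rule bij_betw_byWitness[where f' = rot_next])
    (auto simp: rot_next_prev rot_prev_next rot_prev_in_VB rot_next_in_VB)

lemma opp_in_bridge_verts: "x \<in> bridge_verts \<Longrightarrow> opp x \<in> bridge_verts"
  and opp_opp: "x \<in> bridge_verts \<Longrightarrow> opp (opp x) = x"
  by (cases x; cases "snd x"; auto simp: opp_def bridge_verts_def mem_VB_iff Nb_in_Nt_iff dest: adjD)+

lemma bij_betw_opp: "bij_betw opp bridge_verts bridge_verts"
  by (rule bij_betw_byWitness[where f' = opp]) (auto simp: opp_opp opp_in_bridge_verts)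

lemma tgt_Isl: "tgt (Isl x) = rot_next x"
  by (cases x) (simp add: rot_next_def)

lemma tgt_Brg: "snd x \<noteq> Tl \<Longrightarrow> tgt (Brg x) = opp x"
  by (cases x; cases "snd x") (auto simp: opp_def)

lemma sigma_Isl: "\<sigma> (Isl x) = (if rot_next x \<in> dVB then Isl (rot_next x) else Brg (rot_next x))"
  by (simp add: sigma_def tgt_Isl)

lemma sigma_Brg: "snd x \<noteq> Tl \<Longrightarrow> \<sigma> (Brg x) = Isl (opp x)"
  by (simp add: sigma_def tgt_Brg)

lemma arcs_cases:
  assumes "e \<in> arcs"
  obtains x where "x \<in> VB" "e = Isl x" | x where "x \<in> bridge_verts" "e = Brg x"
  using assms by (auto simp: ABU_def bridge_verts_def)

lemma Isl_in_arcs: "x \<in> VB \<Longrightarrow> Isl x \<in> arcs"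
  and Brg_in_arcs: "x \<in> bridge_verts \<Longrightarrow> Brg x \<in> arcs"
  by (auto simp: ABU_def bridge_verts_def)

lemma sigma_in_arcs: "e \<in> arcs \<Longrightarrow> \<sigma> e \<in> arcs"
proof (erule arcs_cases)
  fix x assume "x \<in> VB" "e = Isl x"
  then show "\<sigma> e \<in> arcs"
    using rot_next_in_VB[of x] by (simp add: sigma_Isl Isl_in_arcs Brg_in_arcs bridge_vertsI)
next
  fix x assume x: "x \<in> bridge_verts" "e = Brg x"
  then show "\<sigma> e \<in> arcs"
    using bridge_vertsD[OF opp_in_bridge_verts[OF x(1)]] bridge_vertsD[OF x(1)]
    by (simp add: sigma_Brg Isl_in_arcs)
qed

lemma bij_betw_sigma: "bij_betw \<sigma> arcs arcs"
proof -
  define \<sigma>' where "\<sigma>' e = (case e of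
      Isl x \<Rightarrow> if x \<in> dVB then Isl (rot_prev x) else Brg (opp x)
    | Brg x \<Rightarrow> Isl (rot_prev x) | _ \<Rightarrow> e)" for e
  have "\<sigma>' (\<sigma> e) = e" if "e \<in> arcs" for e
    using that
  proof (rule arcs_cases)
    fix x assume "x \<in> VB" "e = Isl x"
    then show ?thesis
      using rot_next_in_VB by (auto simp: \<sigma>'_def sigma_Isl rot_prev_next dest: bridge_vertsI)
  next
    fix x assume x: "x \<in> bridge_verts" "e = Brg x"
    then show ?thesis
      using bridge_vertsD[OF opp_in_bridge_verts[OF x(1)]] bridge_vertsD[OF x(1)] opp_opp[OF x(1)]
      by (simp add: \<sigma>'_def sigma_Brg)
  qed
  then have "inj_on \<sigma> arcs"
    by (rule inj_on_inverseI)
  then show ?thesis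
    using finite_arcs sigma_in_arcs by (simp add: bij_betw_def endo_inj_surj image_subsetI)
qed

lemma arc_into_boundary:
  assumes "e \<in> arcs" and "tgt e \<in> dVB"
  shows "e = Isl (rot_prev (tgt e))"
  using assms(1)
proof (rule arcs_cases)
  fix x assume "x \<in> bridge_verts" "e = Brg x"
  then show ?thesis
    using assms(2) bridge_vertsD opp_in_bridge_verts by (auto simp: tgt_Brg)
qed (simp add: tgt_Isl rot_prev_next)

lemma funpow_sigma_in_arcs: "e \<in> arcs \<Longrightarrow> (\<sigma> ^^ n) e \<in> arcs"
  by (induction n) (simp_all add: sigma_in_arcs)

lemma self_in_orbit_sigma: "e \<in> arcs \<Longrightarrow> e \<in> orbit \<sigma> e"
  using self_in_orbit_if_bij_betw[OF bij_betw_sigma finite_arcs] .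

lemma faces_eq: "faces V adj dV rho = orbit \<sigma> ` arcs"
  unfolding faces_def using orbit_altdef_self_in[OF self_in_orbit_sigma] by auto

abbreviation "seg \<equiv> seg_len dV rho"
abbreviation "nxt \<equiv> next_bv dV rho"
abbreviation "nbridges \<equiv> nbr dV rho"

definition reaches_boundary :: "'v bvert \<Rightarrow> bool" where
  "reaches_boundary y \<longleftrightarrow> (\<exists>k. tgt ((\<sigma> ^^ k) (Isl y)) \<in> dVB)"

lemma sigma_Isl_rot_prev: "y \<in> dVB \<Longrightarrow> \<sigma> (Isl (rot_prev y)) = Isl y"
  by (simp add: sigma_Isl rot_next_prev mem_dVB_iff)

lemma entry_arc_in_arcs: "y \<in> dVB \<Longrightarrow> Isl (rot_prev y) \<in> arcs"
  by (simp add: Isl_in_arcs rot_prev_in_VB mem_dVB_iff)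

lemma tgt_entry_arc: "y \<in> dVB \<Longrightarrow> tgt (Isl (rot_prev y)) = y"
  by (simp add: tgt_Isl rot_next_prev mem_dVB_iff)

lemma reaches_boundary_if_dVB:
  assumes "y \<in> dVB"
  shows "reaches_boundary y"
proof -
  obtain n where "0 < n" "(\<sigma> ^^ n) (Isl (rot_prev y)) = Isl (rot_prev y)"
    using self_in_orbit_sigma[OF entry_arc_in_arcs[OF assms]] by (auto simp: orbit_altdef)
  moreover from \<open>0 < n\<close> obtain m where "n = Suc m"
    using gr0_conv_Suc by blast
  ultimately have "(\<sigma> ^^ m) (Isl y) = Isl (rot_prev y)"
    using sigma_Isl_rot_prev[OF assms] by (simp add: funpow_swap1)
  then have "tgt ((\<sigma> ^^ m) (Isl y)) \<in> dVB"
    using assms by (simp add: tgt_entry_arc)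
  then show ?thesis
    unfolding reaches_boundary_def by blast
qed

lemma tgt_seg_len: "reaches_boundary y \<Longrightarrow> tgt ((\<sigma> ^^ seg y) (Isl y)) \<in> dVB"
  unfolding reaches_boundary_def seg_len_def by (rule LeastI_ex)

lemma tgt_before_seg_len: "k < seg y \<Longrightarrow> tgt ((\<sigma> ^^ k) (Isl y)) \<notin> dVB"
  unfolding seg_len_def by (rule not_less_Least)

lemma next_bv_in_dVB: "reaches_boundary y \<Longrightarrow> nxt y \<in> dVB"
  using tgt_seg_len by (simp add: next_bv_def)

lemma funpow_next_bv_in_dVB: "y \<in> dVB \<Longrightarrow> (nxt ^^ j) y \<in> dVB"
  by (induction j) (simp_all add: next_bv_in_dVB reaches_boundary_if_dVB)

lemma sigma_return:
  assumes "y \<in> dVB"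
  shows "(\<sigma> ^^ Suc (seg y)) (Isl (rot_prev y)) = Isl (rot_prev (nxt y))"
proof -
  have "(\<sigma> ^^ seg y) (Isl y) \<in> arcs"
    using assms by (simp add: funpow_sigma_in_arcs Isl_in_arcs mem_dVB_iff)
  then have "(\<sigma> ^^ seg y) (Isl y) = Isl (rot_prev (nxt y))"
    using arc_into_boundary tgt_seg_len[OF reaches_boundary_if_dVB[OF assms]]
    by (simp add: next_bv_def)
  then show ?thesis
    by (simp add: funpow_swap1 sigma_Isl_rot_prev[OF assms])
qed

lemma boundary_visits:
  assumes "y \<in> dVB" and "tgt ((\<sigma> ^^ n) (Isl (rot_prev y))) \<in> dVB"
  shows "\<exists>j. tgt ((\<sigma> ^^ n) (Isl (rot_prev y))) = (nxt ^^ j) y \<and> (0 < n \<longrightarrow> 0 < j)"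
  using assms
proof (induction n arbitrary: y rule: less_induct)
  case (less n)
  show ?case
  proof (cases "n \<le> seg y")
    case True
    have "n = 0"
    proof (rule ccontr)
      assume "n \<noteq> 0"
      then obtain m where "n = Suc m"
        using not0_implies_Suc by blast
      then have "(\<sigma> ^^ n) (Isl (rot_prev y)) = (\<sigma> ^^ m) (Isl y)"
        using sigma_Isl_rot_prev[OF less.prems(1)] by (simp add: funpow_swap1)
      then show False
        using less.prems(2) tgt_before_seg_len[of m y] True \<open>n = Suc m\<close> by simp
    qed
    then show ?thesis
      using tgt_entry_arc[OF less.prems(1)] by (auto intro: exI[of _ 0])
  next
    case False
    define r where "r = n - Suc (seg y)"
    then have n: "n = r + Suc (seg y)"
      using False by simp
    then have "(\<sigma> ^^ n) (Isl (rot_prev y)) = (\<sigma> ^^ r) ((\<sigma> ^^ Suc (seg y)) (Isl (rot_prev y)))"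
      by (simp only: funpow_add comp_apply)
    also have "\<dots> = (\<sigma> ^^ r) (Isl (rot_prev (nxt y)))"
      unfolding sigma_return[OF less.prems(1)] ..
    finally have shift: "(\<sigma> ^^ n) (Isl (rot_prev y)) = (\<sigma> ^^ r) (Isl (rot_prev (nxt y)))" .
    have "r < n" and "nxt y \<in> dVB"
      using n less.prems(1) by (simp_all add: next_bv_in_dVB reaches_boundary_if_dVB)
    with less.IH obtain j where "tgt ((\<sigma> ^^ n) (Isl (rot_prev y))) = (nxt ^^ j) (nxt y)"
      using less.prems(2) unfolding shift by blast
    then have "tgt ((\<sigma> ^^ n) (Isl (rot_prev y))) = (nxt ^^ Suc j) y"
      by (simp add: funpow_swap1)
    then show ?thesis
      by blast
  qed
qed

lemma next_bv_visited:
  assumes "y \<in> dVB"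
  shows "\<exists>n. (\<sigma> ^^ n) (Isl (rot_prev y)) = Isl (rot_prev ((nxt ^^ j) y))"
proof (induction j)
  case (Suc j)
  then obtain n where "(\<sigma> ^^ n) (Isl (rot_prev y)) = Isl (rot_prev ((nxt ^^ j) y))"
    by blast
  then have "(\<sigma> ^^ (Suc (seg ((nxt ^^ j) y)) + n)) (Isl (rot_prev y))
      = Isl (rot_prev ((nxt ^^ Suc j) y))"
    unfolding funpow_add comp_apply using sigma_return[OF funpow_next_bv_in_dVB[OF assms]] by simp
  then show ?case
    by blast
qed (auto intro: exI[of _ 0])

lemma self_in_orbit_next_bv:
  assumes "y \<in> dVB"
  shows "y \<in> orbit nxt y"
proof -
  obtain n where "0 < n" "(\<sigma> ^^ n) (Isl (rot_prev y)) = Isl (rot_prev y)"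
    using self_in_orbit_sigma[OF entry_arc_in_arcs[OF assms]] by (auto simp: orbit_altdef)
  then obtain j where "0 < j" "y = (nxt ^^ j) y"
    using boundary_visits[OF assms, of n] tgt_entry_arc[OF assms] assms by auto
  then show ?thesis
    unfolding orbit_altdef by blast
qed

lemma bverts_face:
  assumes "y \<in> dVB"
  shows "bverts dV rho (orbit \<sigma> (Isl (rot_prev y))) = orbit nxt y"
proof -
  have "bverts dV rho (orbit \<sigma> (Isl (rot_prev y)))
      = {tgt ((\<sigma> ^^ n) (Isl (rot_prev y))) | n. True} \<inter> dVB"
    unfolding bverts_def orbit_altdef_self_in[OF self_in_orbit_sigma[OF entry_arc_in_arcs[OF assms]]]
    by auto
  also have "\<dots> = {(nxt ^^ j) y | j. True}"
  proof (intro equalityI subsetI)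
    fix z assume "z \<in> {tgt ((\<sigma> ^^ n) (Isl (rot_prev y))) | n. True} \<inter> dVB"
    then show "z \<in> {(nxt ^^ j) y | j. True}"
      using boundary_visits[OF assms] by blast
  next
    fix z assume "z \<in> {(nxt ^^ j) y | j. True}"
    then obtain j where z: "z = (nxt ^^ j) y"
      by blast
    then have "z \<in> dVB"
      using funpow_next_bv_in_dVB[OF assms] by simp
    moreover obtain n where "(\<sigma> ^^ n) (Isl (rot_prev y)) = Isl (rot_prev z)"
      using next_bv_visited[OF assms, of j] z by blast
    ultimately show "z \<in> {tgt ((\<sigma> ^^ n) (Isl (rot_prev y))) | n. True} \<inter> dVB"
      using tgt_entry_arc[of z] by (metis (mono_tags, lifting) IntI mem_Collect_eq)
  qed
  also have "\<dots> = orbit nxt y"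
    using orbit_altdef_self_in[OF self_in_orbit_next_bv[OF assms]] by simp
  finally show ?thesis .
qed

lemma face_through_boundary:
  assumes "f \<in> faces V adj dV rho" and "y \<in> bverts dV rho f"
  shows "y \<in> dVB" and "f = orbit \<sigma> (Isl (rot_prev y))"
proof -
  show y: "y \<in> dVB"
    using assms(2) by (simp add: bverts_def)
  obtain e where e: "e \<in> arcs" "f = orbit \<sigma> e"
    using assms(1) by (auto simp: faces_eq)
  then obtain e' where e': "e' \<in> orbit \<sigma> e" "tgt e' = y"
    using assms(2) by (auto simp: bverts_def)
  moreover have "orbit \<sigma> e \<subseteq> arcs"
    using e(1) by (auto simp: orbit_altdef funpow_sigma_in_arcs)
  ultimately have "e' = Isl (rot_prev y)"
    using arc_into_boundary y by blast
  then show "f = orbit \<sigma> (Isl (rot_prev y))"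
    using orbit_eq_if_mem_orbit[OF self_in_orbit_sigma[OF e(1)]] e e' by simp
qed

lemma boundary_in_unique_face:
  assumes "y \<in> dVB"
  shows "\<exists>!f. f \<in> faces_ex V adj dV rho \<and> y \<in> bverts dV rho f"
proof (rule ex1I)
  show "orbit \<sigma> (Isl (rot_prev y)) \<in> faces_ex V adj dV rho \<and> y \<in> bverts dV rho (orbit \<sigma> (Isl (rot_prev y)))"
    using assms bverts_face[OF assms] self_in_orbit_next_bv[OF assms] entry_arc_in_arcs[OF assms]
    by (auto simp: faces_ex_def faces_eq)
qed (use face_through_boundary in \<open>auto simp: faces_ex_def\<close>)

lemma segment_from_entry:
  assumes "x \<in> dVB"
  shows "reaches_boundary (rot_prev x)" and "seg (rot_prev x) = 0"
    and "nxt (rot_prev x) = x" and "nbridges (rot_prev x) = 0"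
proof -
  have at_boundary: "tgt ((\<sigma> ^^ 0) (Isl (rot_prev x))) \<in> dVB"
    using assms by (simp add: tgt_entry_arc)
  then show "reaches_boundary (rot_prev x)"
    unfolding reaches_boundary_def by blast
  show seg: "seg (rot_prev x) = 0"
    unfolding seg_len_def using at_boundary by (rule Least_eq_0)
  show "nxt (rot_prev x) = x"
    using assms by (simp add: next_bv_def seg tgt_entry_arc)
  have "{k. k \<le> 0 \<and> (\<exists>z. (\<sigma> ^^ k) (Isl (rot_prev x)) = Brg z)} = {}"
    by auto
  then show "nbridges (rot_prev x) = 0"
    by (simp add: nbr_def seg)
qed

lemma segment_across_bridge:
  assumes "x \<in> bridge_verts"
  shows "reaches_boundary (rot_prev x) \<longleftrightarrow> reaches_boundary (opp x)"
    and "reaches_boundary (opp x) \<Longrightarrow> seg (rot_prev x) = Suc (Suc (seg (opp x)))"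
    and "reaches_boundary (opp x) \<Longrightarrow> nxt (rot_prev x) = nxt (opp x)"
    and "reaches_boundary (opp x) \<Longrightarrow> nbridges (rot_prev x) = Suc (nbridges (opp x))"
proof -
  note x = bridge_vertsD[OF assms] and opp_x = bridge_vertsD[OF opp_in_bridge_verts[OF assms]]
  have step: "\<sigma> (Isl (rot_prev x)) = Brg x"
    using x by (simp add: sigma_Isl rot_next_prev)
  have shift: "(\<sigma> ^^ Suc (Suc k)) (Isl (rot_prev x)) = (\<sigma> ^^ k) (Isl (opp x))" for k
    using step x by (simp add: funpow_swap1 sigma_Brg)
  have not0: "tgt ((\<sigma> ^^ 0) (Isl (rot_prev x))) \<notin> dVB"
    using x by (simp add: tgt_Isl rot_next_prev)
  have not1: "tgt ((\<sigma> ^^ Suc 0) (Isl (rot_prev x))) \<notin> dVB"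
    using x opp_x by (simp add: step tgt_Brg)
  show "reaches_boundary (rot_prev x) \<longleftrightarrow> reaches_boundary (opp x)"
  proof
    assume "reaches_boundary (rot_prev x)"
    then obtain k where k: "tgt ((\<sigma> ^^ k) (Isl (rot_prev x))) \<in> dVB"
      unfolding reaches_boundary_def by blast
    moreover obtain k' where "k = Suc (Suc k')"
      using k not0 not1 by (cases k; cases "k - 1") auto
    ultimately have "tgt ((\<sigma> ^^ k') (Isl (opp x))) \<in> dVB"
      using shift by simp
    then show "reaches_boundary (opp x)"
      unfolding reaches_boundary_def by blast
  next
    assume "reaches_boundary (opp x)"
    then show "reaches_boundary (rot_prev x)"
      unfolding reaches_boundary_def shift[symmetric] by blast
  qed
  assume "reaches_boundary (opp x)"
  then obtain k where k: "tgt ((\<sigma> ^^ k) (Isl (opp x))) \<in> dVB"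
    unfolding reaches_boundary_def by blast
  have "seg (rot_prev x) = Suc (LEAST k. tgt ((\<sigma> ^^ Suc k) (Isl (rot_prev x))) \<in> dVB)"
    unfolding seg_len_def by (rule Least_Suc[where n = "Suc (Suc k)"]) (use k shift not0 in auto)
  also have "(LEAST k. tgt ((\<sigma> ^^ Suc k) (Isl (rot_prev x))) \<in> dVB)
      = Suc (LEAST k. tgt ((\<sigma> ^^ Suc (Suc k)) (Isl (rot_prev x))) \<in> dVB)"
    by (rule Least_Suc[where n = "Suc k"]) (use k shift not1 in auto)
  finally show seg: "seg (rot_prev x) = Suc (Suc (seg (opp x)))"
    unfolding shift seg_len_def .
  show "nxt (rot_prev x) = nxt (opp x)"
    unfolding next_bv_def seg shift ..
  show "nbridges (rot_prev x) = Suc (nbridges (opp x))"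
    unfolding nbr_def seg card_le_Suc_shift shift using step by simp
qed

lemma sum_VB_split: "(\<Sum>x\<in>VB. g x) = (\<Sum>x\<in>bridge_verts. g x) + (\<Sum>x\<in>dVB. g x)"
  unfolding VB_eq_Un using finite_bridge_verts finite_dVB bridge_verts_Int_dVB
  by (rule sum.union_disjoint)

lemma in_is_eq: "in_is rho x = Isl (rot_prev x)"
  by (cases x) (simp add: rot_prev_def)

lemma in_br_Tl: "snd x = Tl \<Longrightarrow> in_br x = TIn x 0"
  by (cases x) auto

lemma in_br_bridge: "snd x \<noteq> Tl \<Longrightarrow> in_br x = Brg (opp x)"
  by (cases x; cases "snd x") (auto simp: opp_def)

end

section \<open>The limit state of the walk\<close>

locale facial_qw = blowup_graph V adj dV rho
  for V :: "'v set" and adj and dV and rho +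
  fixes a b c d :: complex
  assumes unitary: "unitary2 a b c d" and coins_nonzero: "a * b * c * d \<noteq> 0"
    and d_real: "d \<in> \<real>"
begin

definition \<omega> :: complex where
  "\<omega> = - (a * d - b * c)"

lemma norm_omega: "norm \<omega> = 1"
  using unitary2_norm_det[OF unitary] by (simp add: \<omega>_def norm_minus_commute)

lemma d_mult_omega: "d * \<omega> = - a"
  unfolding \<omega>_def mult_minus_right
  by (rule arg_cong[where f = uminus, OF sym, OF unitary2_real_corner[OF unitary d_real]])

lemma norm_a_less_1: "norm a < 1"
  using unitary2_norm_less_1[OF unitary] coins_nonzero by auto

lemma b_nonzero: "b \<noteq> 0" and c_nonzero: "c \<noteq> 0" and omega_nonzero: "\<omega> \<noteq> 0"
  using coins_nonzero norm_omega by auto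

end

locale boundary_solution = facial_qw V adj dV rho a b c d
  for V :: "'v set" and adj and dV and rho and a b c d +
  fixes \<alpha> Y :: "'v bvert \<Rightarrow> complex"
  assumes Y_step: "x \<in> dVB \<Longrightarrow> Y (nxt x) = \<omega> ^ nbridges x * (a * Y x + b * \<alpha> x)"
begin

text \<open>The value on a bridge is read off from the island equation at its endpoint.\<close>

definition island_val :: "'v bvert \<Rightarrow> complex" where
  "island_val w = (if reaches_boundary w then inverse \<omega> ^ nbridges w * Y (nxt w) else 0)"

definition Phi :: "'v bvert arc \<Rightarrow> complex" where
  "Phi e = (case e of
      Isl w \<Rightarrow> island_val w
    | Brg x \<Rightarrow> (island_val (opp x) - a * island_val (rot_prev (opp x))) / b
    | _ \<Rightarrow> 0)"

lemma island_val_entry: "x \<in> dVB \<Longrightarrow> island_val (rot_prev x) = Y x"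
  by (simp add: island_val_def segment_from_entry)

lemma island_val_boundary:
  assumes "x \<in> dVB"
  shows "island_val x = a * Y x + b * \<alpha> x"
proof -
  have "island_val x = inverse \<omega> ^ nbridges x * (\<omega> ^ nbridges x * (a * Y x + b * \<alpha> x))"
    using assms by (simp add: island_val_def reaches_boundary_if_dVB Y_step)
  then show ?thesis
    using omega_nonzero by (simp add: power_mult_distrib [symmetric])
qed

lemma island_val_bridge:
  assumes "x \<in> bridge_verts"
  shows "island_val (opp x) = \<omega> * island_val (rot_prev x)"
proof (cases "reaches_boundary (opp x)")
  case True
  then show ?thesis
    using segment_across_bridge[OF assms] omega_nonzero by (simp add: island_val_def)
next
  case False
  then show ?thesis
    using segment_across_bridge(1)[OF assms] by (simp add: island_val_def)
qed

lemma Phi_Isl_stationary: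
  assumes "x \<in> VB"
  shows "Phi (Isl x) = a * Phi (Isl (rot_prev x)) + b * (if snd x = Tl then \<alpha> x else Phi (Brg (opp x)))"
proof (cases "snd x = Tl")
  case True
  then show ?thesis
    using assms island_val_entry island_val_boundary by (simp add: Phi_def mem_dVB_iff)
next
  case False
  then have "opp (opp x) = x"
    using assms by (simp add: opp_opp bridge_vertsI mem_dVB_iff)
  then show ?thesis
    using False b_nonzero by (simp add: Phi_def)
qed

lemma Phi_Brg_stationary:
  assumes "x \<in> bridge_verts"
  shows "Phi (Brg x) = c * Phi (Isl (rot_prev x)) + d * Phi (Brg (opp x))"
proof -
  define G1 G2 where "G1 = island_val (rot_prev x)" and "G2 = island_val (rot_prev (opp x))"
  have "Phi (Brg x) = (\<omega> * G1 - a * G2) / b"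
    using island_val_bridge[OF assms] by (simp add: Phi_def G1_def G2_def)
  moreover have "Phi (Brg (opp x)) = (\<omega> * G2 - a * G1) / b"
    using island_val_bridge[OF opp_in_bridge_verts[OF assms]]
    by (simp add: Phi_def G1_def G2_def opp_opp[OF assms])
  moreover have "Phi (Isl (rot_prev x)) = G1"
    by (simp add: Phi_def G1_def)
  moreover have "\<omega> * G1 - a * G2 = b * c * G1 + d * (\<omega> * G2 - a * G1)"
  proof -
    have "b * c - a * d = \<omega>"
      by (simp add: \<omega>_def)
    moreover note d_mult_omega
    moreover have "b * c * G1 + d * (\<omega> * G2 - a * G1) = (b * c - a * d) * G1 + d * \<omega> * G2"
      by (simp add: algebra_simps)
    ultimately show ?thesis
      by simp
  qed
  moreover have "c * G1 + d * ((\<omega> * G2 - a * G1) / b) = (b * c * G1 + d * (\<omega> * G2 - a * G1)) / b"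
    using b_nonzero by (simp add: field_simps)
  ultimately show ?thesis
    by simp
qed

abbreviation "U \<equiv> Uwalk V adj dV rho a b c d"

definition Psi :: "nat \<Rightarrow> 'v bvert arc \<Rightarrow> complex" where
  "Psi n = (U ^^ n) (Psi0 dV \<alpha>)"

lemma Psi_TIn: "x \<in> dVB \<Longrightarrow> Psi n (TIn x j) = \<alpha> x"
  by (induction n arbitrary: j) (simp_all add: Psi_def Psi0_def Uwalk_def)

lemma Psi_Suc_Isl:
  assumes "x \<in> VB"
  shows "Psi (Suc n) (Isl x)
    = a * Psi n (Isl (rot_prev x)) + b * (if snd x = Tl then \<alpha> x else Psi n (Brg (opp x)))"
  using assms
  by (cases "snd x = Tl")
    (simp_all add: Psi_def Uwalk_def in_is_eq in_br_Tl in_br_bridge Psi_TIn[unfolded Psi_def] mem_dVB_iff)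

lemma Psi_Suc_Brg:
  assumes "x \<in> bridge_verts"
  shows "Psi (Suc n) (Brg x) = c * Psi n (Isl (rot_prev x)) + d * Psi n (Brg (opp x))"
  using bridge_vertsD[OF assms] by (simp add: Psi_def Uwalk_def in_is_eq in_br_bridge)

lemma Psi_Suc_TOut:
  assumes "x \<in> dVB"
  shows "Psi (Suc n) (TOut x 0) = c * Psi n (Isl (rot_prev x)) + d * \<alpha> x"
  using assms Psi_TIn[OF assms] mem_dVB_iff[of x]
  by (simp add: Psi_def Uwalk_def in_is_eq in_br_Tl)

definition err :: "nat \<Rightarrow> 'v bvert arc \<Rightarrow> complex" where
  "err n e = Psi n e - Phi e"

lemma err_Suc_Isl:
  assumes "x \<in> VB"
  shows "err (Suc n) (Isl x)
    = a * err n (Isl (rot_prev x)) + b * (if snd x = Tl then 0 else err n (Brg (opp x)))"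
  using Psi_Suc_Isl[OF assms, of n] Phi_Isl_stationary[OF assms] by (simp add: err_def algebra_simps)

lemma err_Suc_Brg:
  assumes "x \<in> bridge_verts"
  shows "err (Suc n) (Brg x) = c * err n (Isl (rot_prev x)) + d * err n (Brg (opp x))"
  using Psi_Suc_Brg[OF assms, of n] Phi_Brg_stationary[OF assms] by (simp add: err_def algebra_simps)

definition energy :: "nat \<Rightarrow> real" where
  "energy n = (\<Sum>x\<in>VB. norm (err n (Isl x)) ^ 2) + (\<Sum>x\<in>bridge_verts. norm (err n (Brg x)) ^ 2)"

definition leakage :: "nat \<Rightarrow> real" where
  "leakage n = (\<Sum>x\<in>dVB. norm (err n (Isl (rot_prev x))) ^ 2)"

lemma energy_Suc: "energy (Suc n) + norm c ^ 2 * leakage n = energy n"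
proof -
  define i j where "i x = err n (Isl (rot_prev x))" and "j x = err n (Brg (opp x))" for x
  have island_sum: "(\<Sum>x\<in>VB. norm (err (Suc n) (Isl x)) ^ 2)
      = (\<Sum>x\<in>bridge_verts. norm (a * i x + b * j x) ^ 2) + (\<Sum>x\<in>dVB. norm (a * i x) ^ 2)"
    unfolding sum_VB_split
    by (intro arg_cong2[where f = "(+)"] sum.cong)
      (auto simp: err_Suc_Isl i_def j_def mem_dVB_iff dest: bridge_vertsD)
  have bridge_sum: "(\<Sum>x\<in>bridge_verts. norm (err (Suc n) (Brg x)) ^ 2)
      = (\<Sum>x\<in>bridge_verts. norm (c * i x + d * j x) ^ 2)"
    by (rule sum.cong) (simp_all add: err_Suc_Brg i_def j_def)
  have boundary_term: "norm (a * i x) ^ 2 = norm (i x) ^ 2 - norm c ^ 2 * norm (i x) ^ 2" for x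
    using unitary2_norm_preserving[OF unitary, of "i x" 0] by (simp add: norm_mult power_mult_distrib)
  have "energy (Suc n) = (\<Sum>x\<in>bridge_verts. norm (a * i x + b * j x) ^ 2 + norm (c * i x + d * j x) ^ 2)
      + (\<Sum>x\<in>dVB. norm (a * i x) ^ 2)"
    unfolding energy_def island_sum bridge_sum by (simp add: sum.distrib)
  also have "\<dots> = (\<Sum>x\<in>bridge_verts. norm (i x) ^ 2 + norm (j x) ^ 2)
      + (\<Sum>x\<in>dVB. norm (i x) ^ 2 - norm c ^ 2 * norm (i x) ^ 2)"
    by (simp add: unitary2_norm_preserving[OF unitary] boundary_term)
  also have "\<dots> = (\<Sum>x\<in>VB. norm (i x) ^ 2) + (\<Sum>x\<in>bridge_verts. norm (j x) ^ 2) - norm c ^ 2 * leakage n"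
    by (simp add: sum_VB_split sum.distrib sum_subtractf sum_distrib_left leakage_def i_def)
  also have "(\<Sum>x\<in>VB. norm (i x) ^ 2) = (\<Sum>x\<in>VB. norm (err n (Isl x)) ^ 2)"
    unfolding i_def using sum.reindex_bij_betw[OF bij_betw_rot_prev, of "\<lambda>y. norm (err n (Isl y)) ^ 2"]
    by simp
  also have "(\<Sum>x\<in>bridge_verts. norm (j x) ^ 2) = (\<Sum>x\<in>bridge_verts. norm (err n (Brg x)) ^ 2)"
    unfolding j_def using sum.reindex_bij_betw[OF bij_betw_opp, of "\<lambda>y. norm (err n (Brg y)) ^ 2"]
    by simp
  finally show ?thesis
    unfolding energy_def by simp
qed

lemma energy_nonneg: "0 \<le> energy n"
  by (simp add: energy_def sum_nonneg)

lemma energy_telescope: "energy N + norm c ^ 2 * (\<Sum>n<N. leakage n) = energy 0"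
proof (induction N)
  case (Suc N)
  then show ?case
    using energy_Suc[of N] by (simp add: algebra_simps)
qed simp

lemma err_entry_tendsto_zero:
  assumes "x \<in> dVB"
  shows "(\<lambda>n. err n (Isl (rot_prev x))) \<longlonglongrightarrow> 0"
proof -
  have "(\<Sum>n<N. norm (err n (Isl (rot_prev x))) ^ 2) \<le> energy 0 / norm c ^ 2" for N
  proof -
    have "(\<Sum>n<N. norm (err n (Isl (rot_prev x))) ^ 2) \<le> (\<Sum>n<N. leakage n)"
      unfolding leakage_def using assms finite_dVB
      by (intro sum_mono member_le_sum[where f = "\<lambda>x. norm (err _ (Isl (rot_prev x))) ^ 2"]) auto
    also have "\<dots> \<le> energy 0 / norm c ^ 2"
      using energy_telescope[of N] energy_nonneg[of N] c_nonzero by (simp add: field_simps)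
    finally show ?thesis .
  qed
  then have "summable (\<lambda>n. norm (err n (Isl (rot_prev x))) ^ 2)"
    by (intro summableI_nonneg_bounded) auto
  then have "(\<lambda>n. norm (err n (Isl (rot_prev x))) ^ 2) \<longlonglongrightarrow> 0"
    by (rule summable_LIMSEQ_zero)
  then have "(\<lambda>n. norm (err n (Isl (rot_prev x)))) \<longlonglongrightarrow> 0"
    using tendsto_real_sqrt by fastforce
  then show ?thesis
    by (rule tendsto_norm_zero_cancel)
qed

lemma outflow_tendsto:
  assumes "x \<in> dVB"
  shows "(\<lambda>n. Psi n (TOut x 0)) \<longlonglongrightarrow> c * Y x + d * \<alpha> x"
proof -
  have "Psi (Suc n) (TOut x 0) = c * err n (Isl (rot_prev x)) + (c * Y x + d * \<alpha> x)" for n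
    using Psi_Suc_TOut[OF assms, of n] island_val_entry[OF assms]
    by (simp add: err_def Phi_def algebra_simps)
  moreover have "(\<lambda>n. c * err n (Isl (rot_prev x)) + (c * Y x + d * \<alpha> x)) \<longlonglongrightarrow> c * 0 + (c * Y x + d * \<alpha> x)"
    by (intro tendsto_intros err_entry_tendsto_zero[OF assms])
  ultimately have "(\<lambda>n. Psi (Suc n) (TOut x 0)) \<longlonglongrightarrow> c * Y x + d * \<alpha> x"
    by simp
  then show ?thesis
    by (rule LIMSEQ_imp_Suc)
qed

end

section \<open>The scattering matrix of an external face\<close>

context facial_qw
begin

abbreviation "\<kappa> y \<equiv> card (orbit nxt y)"
abbreviation "xs \<equiv> xf dV rho"

lemma xf_in_dVB: "x0 \<in> dVB \<Longrightarrow> xs x0 j \<in> dVB"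
  by (simp add: xf_def funpow_next_bv_in_dVB)

lemma xf_add: "xs (xs x0 i) j = xs x0 (i + j)"
  unfolding xf_def add.commute[of i j] funpow_add comp_apply ..

lemma xf_mod_kappa: "x0 \<in> dVB \<Longrightarrow> xs x0 (j mod \<kappa> x0) = xs x0 j"
  unfolding xf_def by (rule funpow_mod_eq[OF funpow_card_orbit[OF self_in_orbit_next_bv]])

lemma kappa_xf: "x0 \<in> dVB \<Longrightarrow> \<kappa> (xs x0 i) = \<kappa> x0"
  unfolding xf_def using self_in_orbit_next_bv
  by (metis funpow_in_orbit orbit_eq_if_mem_orbit)

lemma kappa_pos: "x0 \<in> dVB \<Longrightarrow> 0 < \<kappa> x0"
  using finite_orbit[OF self_in_orbit_next_bv] orbit_nonempty by (simp add: card_gt_0_iff)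

definition face_matrix :: "'v bvert \<Rightarrow> complex mat" where
  "face_matrix x0 = Pmat (\<kappa> x0) (deltaf dV rho x0) \<omega>"

definition face_resolvent :: "'v bvert \<Rightarrow> complex mat" where
  "face_resolvent x0 = (SOME M. M \<in> carrier_mat (\<kappa> x0) (\<kappa> x0)
      \<and> (1\<^sub>m (\<kappa> x0) - a \<cdot>\<^sub>m face_matrix x0) * M = 1\<^sub>m (\<kappa> x0)
      \<and> M * (1\<^sub>m (\<kappa> x0) - a \<cdot>\<^sub>m face_matrix x0) = 1\<^sub>m (\<kappa> x0))"

lemma face_resolvent:
  shows "face_resolvent x0 \<in> carrier_mat (\<kappa> x0) (\<kappa> x0)"
    and "(1\<^sub>m (\<kappa> x0) - a \<cdot>\<^sub>m face_matrix x0) * face_resolvent x0 = 1\<^sub>m (\<kappa> x0)"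
    and "face_resolvent x0 * (1\<^sub>m (\<kappa> x0) - a \<cdot>\<^sub>m face_matrix x0) = 1\<^sub>m (\<kappa> x0)"
  using someI_ex[OF one_minus_smult_Pmat_invertible[OF norm_a_less_1 norm_omega, unfolded Bex_def]]
  unfolding face_resolvent_def face_matrix_def by blast+

definition face_inflow :: "('v bvert \<Rightarrow> complex) \<Rightarrow> 'v bvert \<Rightarrow> complex vec" where
  "face_inflow \<alpha> x0 = vec (\<kappa> x0) (\<lambda>j. \<alpha> (xs x0 j))"

definition face_solution :: "('v bvert \<Rightarrow> complex) \<Rightarrow> 'v bvert \<Rightarrow> nat \<Rightarrow> complex" where
  "face_solution \<alpha> x0 j = b * (face_matrix x0 *\<^sub>v (face_resolvent x0 *\<^sub>v face_inflow \<alpha> x0)) $ j"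

lemma face_solution_step:
  assumes "j < \<kappa> x0"
  shows "face_solution \<alpha> x0 (Suc j mod \<kappa> x0)
    = \<omega> ^ nbridges (xs x0 j) * (a * face_solution \<alpha> x0 j + b * \<alpha> (xs x0 j))"
  using resolvent_recurrence[OF face_resolvent(1,2)[of x0, unfolded face_matrix_def], of "face_inflow \<alpha> x0" j b]
    assms
  by (simp add: face_solution_def face_matrix_def face_inflow_def deltaf_def)

lemma face_solution_shift:
  assumes "x0 \<in> dVB" and "j < \<kappa> x0"
  shows "face_solution \<alpha> (xs x0 i) j = face_solution \<alpha> x0 ((i + j) mod \<kappa> x0)"
proof -
  let ?k = "\<kappa> x0"
  have k: "\<kappa> (xs x0 i) = ?k"
    using kappa_xf[OF assms(1)] .
  show ?thesis
  proof (rule cyclic_recurrence_unique[OF norm_a_less_1, where k = ?k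
        and u = "\<lambda>j. face_solution \<alpha> (xs x0 i) j" and v = "\<lambda>j. face_solution \<alpha> x0 ((i + j) mod ?k)"
        and w = "\<lambda>j. \<omega> ^ nbridges (xs x0 (i + j))" and \<beta> = "\<lambda>j. b * \<alpha> (xs x0 (i + j))"])
    show "norm (\<omega> ^ nbridges (xs x0 (i + j))) = 1" if "j < ?k" for j
      by (simp add: norm_power norm_omega)
    show "face_solution \<alpha> (xs x0 i) (Suc j mod ?k)
        = \<omega> ^ nbridges (xs x0 (i + j)) * (a * face_solution \<alpha> (xs x0 i) j + b * \<alpha> (xs x0 (i + j)))"
      if "j < ?k" for j
      using face_solution_step[of j "xs x0 i" \<alpha>] that k by (simp add: xf_add)
    show "face_solution \<alpha> x0 ((i + Suc j mod ?k) mod ?k)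
        = \<omega> ^ nbridges (xs x0 (i + j)) * (a * face_solution \<alpha> x0 ((i + j) mod ?k) + b * \<alpha> (xs x0 (i + j)))"
      if "j < ?k" for j
    proof -
      have "(i + Suc j mod ?k) mod ?k = Suc ((i + j) mod ?k) mod ?k"
        by (simp add: mod_add_right_eq mod_Suc_eq)
      moreover have "(i + j) mod ?k < ?k"
        using kappa_pos[OF assms(1)] by simp
      ultimately show ?thesis
        using face_solution_step[of "(i + j) mod ?k" x0 \<alpha>] xf_mod_kappa[OF assms(1)] by simp
    qed
  qed (use assms(2) in simp)
qed

lemma boundary_solution_face_solution:
  "boundary_solution V adj dV rho a b c d \<alpha> (\<lambda>x. face_solution \<alpha> x 0)"
proof unfold_locales
  fix x assume x: "x \<in> dVB"
  have "face_solution \<alpha> (nxt x) 0 = face_solution \<alpha> (xs x 1) 0"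
    by (simp add: xf_def)
  also have "\<dots> = face_solution \<alpha> x (Suc 0 mod \<kappa> x)"
    using face_solution_shift[OF x kappa_pos[OF x], of \<alpha> 1] by simp
  also have "\<dots> = \<omega> ^ nbridges x * (a * face_solution \<alpha> x 0 + b * \<alpha> x)"
    using face_solution_step[OF kappa_pos[OF x], of \<alpha>] by (simp add: xf_def)
  finally show "face_solution \<alpha> (nxt x) 0 = \<omega> ^ nbridges x * (a * face_solution \<alpha> x 0 + b * \<alpha> x)" .
qed

lemma outflow_tendsto_face:
  assumes "x0 \<in> dVB" and "i < \<kappa> x0"
  shows "(\<lambda>n. ((Uwalk V adj dV rho a b c d ^^ n) (Psi0 dV \<alpha>)) (TOut (xs x0 i) 0))
    \<longlonglongrightarrow> (\<Sum>j<\<kappa> x0. ((b * c) \<cdot>\<^sub>m (face_matrix x0 * face_resolvent x0) + d \<cdot>\<^sub>m 1\<^sub>m (\<kappa> x0)) $$ (i, j)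
        * \<alpha> (xs x0 j))"
proof -
  interpret boundary_solution V adj dV rho a b c d \<alpha> "\<lambda>x. face_solution \<alpha> x 0"
    by (rule boundary_solution_face_solution)
  let ?S = "(b * c) \<cdot>\<^sub>m (face_matrix x0 * face_resolvent x0) + d \<cdot>\<^sub>m 1\<^sub>m (\<kappa> x0)"
  have "face_matrix x0 \<in> carrier_mat (\<kappa> x0) (\<kappa> x0)" and "face_inflow \<alpha> x0 \<in> carrier_vec (\<kappa> x0)"
    by (simp_all add: face_matrix_def Pmat_carrier face_inflow_def)
  then have "(\<Sum>j<\<kappa> x0. ?S $$ (i, j) * face_inflow \<alpha> x0 $ j)
      = c * face_solution \<alpha> x0 i + d * face_inflow \<alpha> x0 $ i"
    unfolding face_solution_def by (rule scattering_row[OF _ face_resolvent(1) _ assms(2)])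
  moreover have "(\<Sum>j<\<kappa> x0. ?S $$ (i, j) * face_inflow \<alpha> x0 $ j) = (\<Sum>j<\<kappa> x0. ?S $$ (i, j) * \<alpha> (xs x0 j))"
    by (rule sum.cong) (simp_all add: face_inflow_def)
  moreover have "face_solution \<alpha> (xs x0 i) 0 = face_solution \<alpha> x0 i"
    using face_solution_shift[OF assms(1) kappa_pos[OF assms(1)], of \<alpha> i] assms(2) by simp
  ultimately show ?thesis
    using outflow_tendsto[OF xf_in_dVB[OF assms(1)], of i] assms(2) by (simp add: Psi_def face_inflow_def)
qed

lemma scattering_on_face:
  assumes "f \<in> faces_ex V adj dV rho" and "x0 \<in> bverts dV rho f"
  shows "let k = kappa dV rho f; xs = xf dV rho x0; w = - (a * d - b * c);
            P = Pmat k (deltaf dV rho x0) w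
        in bij_betw xs {..<k} (bverts dV rho f)
         \<and> (\<exists>M \<in> carrier_mat k k. (1\<^sub>m k - a \<cdot>\<^sub>m P) * M = 1\<^sub>m k \<and> M * (1\<^sub>m k - a \<cdot>\<^sub>m P) = 1\<^sub>m k \<and>
             (let S = (b * c) \<cdot>\<^sub>m (P * M) + d \<cdot>\<^sub>m 1\<^sub>m k in
              \<forall>\<alpha>. \<forall>i<k. (\<lambda>n. ((Uwalk V adj dV rho a b c d ^^ n) (Psi0 dV \<alpha>)) (TOut (xs i) 0))
                         \<longlonglongrightarrow> (\<Sum>j<k. S $$ (i, j) * \<alpha> (xs j))))"
proof -
  have x0: "x0 \<in> dVB" and "f = orbit \<sigma> (Isl (rot_prev x0))"
    using face_through_boundary[of f x0] assms by (auto simp: faces_ex_def)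
  then have bverts: "bverts dV rho f = orbit nxt x0"
    using bverts_face by simp
  then have kappa: "kappa dV rho f = \<kappa> x0"
    by (simp add: kappa_def)
  have "bij_betw (xs x0) {..<\<kappa> x0} (bverts dV rho f)"
    unfolding bverts using bij_betw_funpow_orbit[OF self_in_orbit_next_bv[OF x0]]
    by (simp add: xf_def [abs_def])
  then show ?thesis
    unfolding Let_def kappa \<omega>_def[symmetric] face_matrix_def[symmetric]
    using face_resolvent outflow_tendsto_face[OF x0] by blast
qed

end

theorem mainTheorem2:
  fixes V :: "'v set" and adj :: "'v \<Rightarrow> 'v \<Rightarrow> bool" and dV :: "'v set"
    and rho :: "'v \<Rightarrow> 'v port \<Rightarrow> 'v port" and a b c d :: complex
  assumes "simple_graph V adj" and "graph_connected V adj" and "dV \<subseteq> V"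
    and "is_rotation V adj dV rho"
    and "unitary2 a b c d" and "a * b * c * d \<noteq> 0" and "d \<in> \<real>"
  shows "(\<forall>y\<in>dVBU dV. \<exists>!f. f \<in> faces_ex V adj dV rho \<and> y \<in> bverts dV rho f)
    \<and> (\<forall>f\<in>faces_ex V adj dV rho. \<forall>x0\<in>bverts dV rho f.
        let k = kappa dV rho f; xs = xf dV rho x0; w = - (a * d - b * c);
            P = Pmat k (deltaf dV rho x0) w
        in bij_betw xs {..<k} (bverts dV rho f)
         \<and> (\<exists>M \<in> carrier_mat k k. (1\<^sub>m k - a \<cdot>\<^sub>m P) * M = 1\<^sub>m k \<and> M * (1\<^sub>m k - a \<cdot>\<^sub>m P) = 1\<^sub>m k \<and>
             (let S = (b * c) \<cdot>\<^sub>m (P * M) + d \<cdot>\<^sub>m 1\<^sub>m k in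
              \<forall>\<alpha>. \<forall>i<k. (\<lambda>n. ((Uwalk V adj dV rho a b c d ^^ n) (Psi0 dV \<alpha>)) (TOut (xs i) 0))
                         \<longlonglongrightarrow> (\<Sum>j<k. S $$ (i, j) * \<alpha> (xs j)))))"
proof -
  interpret facial_qw V adj dV rho a b c d
    using assms(1,3-7) by unfold_locales
  show ?thesis
    using boundary_in_unique_face scattering_on_face by blast
qed

end
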